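(* Let $\varepsilon>0$, $\delta,\beta\in(0,1)$, let $Q$ be a real-valued graph query, and let $\mathcal M^{\mathrm{edge}}_Q(H,\varepsilon',\delta',\beta')$ be an edge-DP mechanism for $Q$ with error function $\mathrm{Err}^{\mathrm{edge}}_Q$, meaning that for every graph $H$ and parameters, with probability at least $1-\beta'$, $|\mathcal M^{\mathrm{edge}}_Q(H,\varepsilon',\delta',\beta')-Q(H)|\le\mathrm{Err}^{\mathrm{edge}}_Q(H,\varepsilon',\delta',\beta')$. Let the N2E mechanism on input $G$ be: (i) compute $\tau^*$ by the procedure $\mathcal A(G,2\varepsilon/3,\delta/2,2\beta/3)$ below; (ii) set $\overline G=\mathrm{Clip}(G,\tau^* )$; (iii) output $\mathcal M^{\mathrm{edge}}_Q(\overline G,\varepsilon/(6\tau^* ),\delta/(4\tau^* ),\beta/3)$, where $\mathcal A(G,\varepsilon_1,\delta_1,\beta_1)$: set $T=-\frac8{\varepsilon_1}\ln\frac4{\beta_1}$, $\tilde T=T+\mathrm{Lap}(4/\varepsilon_1)$; for $\tau=1,2,4,\dots$ compute $\tilde Q_\tau=Q_{\mathrm{LP\text{-}Del\text{-}N}}(G,\tau)+\mathrm{Lap}(4/\varepsilon_1)$, stop at the first $\tau$ with $\tilde Q_\tau>\tilde T$, and return $\tau^*=3\tau+3|Q_{\mathrm{LP\text{-}Del\text{-}N}}(G,\tau)|+\mathrm{Lap}(6/\varepsilon_1)+\frac6{\varepsilon_1}\ln\max(\frac1{\delta_1},\frac2{\beta_1})+1$. Then for every graph $G$, with probability at least $1-\beta$,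 the output $\mathcal M$ of N2E satisfies $$|\mathcal M-Q(G)|\le|Q(G)-Q(\overline G)|+\mathrm{Err}^{\mathrm{edge}}_Q\big(\overline G,\varepsilon/(6\tau^* ),\delta/(4\tau^* ),\beta/3\big),$$ and $\overline G$ is obtained from $G$ by clipping edges incident to at most $O\big(\log(\log(\deg(G))/\beta)/\varepsilon\big)$ nodes of $G$.
   Context: Graphs are finite, simple, undirected, with nodes from a universe having a fixed total order; edges are ordered lexicographically (lower endpoint first), consistently across graphs. $E(v)$ is the set of edges at $v$; $\deg(G)$ is the maximum degree. Edge-DP: $(\varepsilon,\delta)$-differential privacy where neighboring graphs differ in exactly one edge. $\mathrm{Clip}(G,t)$: for each node $v$ let $E_v^t$ be the edges of $E(v)$ of rank at most $t$ within $E(v)$ in the edge order; $\mathrm{Clip}(G,t)$ has the same nodes and keeps exactly the edges $(a,b)$ in both $E_a^t$ and $E_b^t$. $Q_{\mathrm{LP\text{-}Del\text{-}N}}(G,\tau)$ is the optimal value of the LP: maximize $-\sum_v x_v$ s.t. $y_e\ge1-x_{v'}-x_{v''}$ for each edge $e=(v',v'')$, $\sum_{e\in E(v)}y_e\le\tau$ for each node $v$, $x_v,y_e\in[0,1]$. $\mathrm{Lap}(b)$ has density $\frac1{2b}e^{-|x|/b}$; all random draws are independent. *)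

theory Defs
  imports "HOL-Probability.Probability"
begin

text \<open>Nodes come from a linearly ordered
universe; an edge is stored as the ordered pair (a, b) with a < b (lower endpoint first).\<close>

type_synonym 'v graph = "'v set \<times> ('v \<times> 'v) set"

definition wf_graph :: "('v::linorder) graph \<Rightarrow> bool" where
  "wf_graph G \<longleftrightarrow> finite (fst G) \<and>
     snd G \<subseteq> {(a, b). a \<in> fst G \<and> b \<in> fst G \<and> a < b}"

definition edges_at :: "'v graph \<Rightarrow> 'v \<Rightarrow> ('v \<times> 'v) set" where
  "edges_at G v = {e \<in> snd G. fst e = v \<or> snd e = v}"

definition max_deg :: "'v graph \<Rightarrow> nat" where
  "max_deg G = Max ({0} \<union> (\<lambda>v. card (edges_at G v)) ` fst G)"

definition edge_le :: "('v::linorder \<times> 'v) \<Rightarrow> ('v \<times> 'v) \<Rightarrow> bool" where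
  "edge_le e e' \<longleftrightarrow> fst e < fst e' \<or> (fst e = fst e' \<and> snd e \<le> snd e')"

text \<open>Rank (starting at 1) of edge e within E(v) in the edge order.\<close>
definition edge_rank :: "('v::linorder) graph \<Rightarrow> 'v \<Rightarrow> ('v \<times> 'v) \<Rightarrow> nat" where
  "edge_rank G v e = card {e' \<in> edges_at G v. edge_le e' e}"

definition clip_at :: "('v::linorder) graph \<Rightarrow> real \<Rightarrow> 'v \<Rightarrow> ('v \<times> 'v) set" where
  "clip_at G t v = {e \<in> edges_at G v. real (edge_rank G v e) \<le> t}"

definition Clip :: "('v::linorder) graph \<Rightarrow> real \<Rightarrow> 'v graph" where
  "Clip G t = (fst G, {e \<in> snd G. e \<in> clip_at G t (fst e) \<and> e \<in> clip_at G t (snd e)})"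

definition edge_neighbors :: "'v graph \<Rightarrow> 'v graph \<Rightarrow> bool" where
  "edge_neighbors G H \<longleftrightarrow> fst G = fst H \<and>
     card ((snd G - snd H) \<union> (snd H - snd G)) = 1"

definition lp_feasible ::
  "'v graph \<Rightarrow> real \<Rightarrow> ('v \<Rightarrow> real) \<Rightarrow> ('v \<times> 'v \<Rightarrow> real) \<Rightarrow> bool" where
  "lp_feasible G \<tau> x y \<longleftrightarrow>
     (\<forall>v\<in>fst G. 0 \<le> x v \<and> x v \<le> 1) \<and>
     (\<forall>e\<in>snd G. 0 \<le> y e \<and> y e \<le> 1) \<and>
     (\<forall>e\<in>snd G. y e \<ge> 1 - x (fst e) - x (snd e)) \<and>
     (\<forall>v\<in>fst G. (\<Sum>e\<in>edges_at G v. y e) \<le> \<tau>)"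

definition Q_LP :: "'v graph \<Rightarrow> real \<Rightarrow> real" where
  "Q_LP G \<tau> = Sup {- (\<Sum>v\<in>fst G. x v) | x y. lp_feasible G \<tau> x y}"

definition lap :: "real \<Rightarrow> real measure" where
  "lap b = density lborel (\<lambda>x. ennreal (exp (- \<bar>x\<bar> / b) / (2 * b)))"

text \<open>Noise of procedure A with privacy parameter e1: a sequence nu of independent Lap(4/e1)
draws (nu k is the noise added to Q_LP(G, 2^k)), the noise t0 ~ Lap(4/e1) of the threshold
and the final noise z ~ Lap(6/e1); all independent.\<close>
definition noiseA :: "real \<Rightarrow> ((nat \<Rightarrow> real) \<times> real \<times> real) measure" where
  "noiseA e1 = (\<Pi>\<^sub>M k\<in>(UNIV::nat set). lap (4 / e1)) \<Otimes>\<^sub>M (lap (4 / e1) \<Otimes>\<^sub>M lap (6 / e1))"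

text \<open>Procedure A(G, e1, d1, b1) as a function of its noise. The loop tries tau = 2^k for
k = 0, 1, 2, ... and stops at the first k with noisy value exceeding the noisy threshold.\<close>
definition tauA :: "('v::linorder) graph \<Rightarrow> real \<Rightarrow> real \<Rightarrow> real \<Rightarrow>
    (nat \<Rightarrow> real) \<times> real \<times> real \<Rightarrow> real" where
  "tauA G e1 d1 b1 \<omega> =
     (let \<nu> = fst \<omega>; t0 = fst (snd \<omega>); z = snd (snd \<omega>);
          T = - (8 / e1) * ln (4 / b1);
          Tt = T + t0;
          k = (LEAST k. Q_LP G (2 ^ k) + \<nu> k > Tt);
          \<tau> = (2::real) ^ k
      in 3 * \<tau> + 3 * \<bar>Q_LP G \<tau>\<bar> + z + (6 / e1) * ln (max (1 / d1) (2 / b1)) + 1)"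

definition tau_star :: "('v::linorder) graph \<Rightarrow> real \<Rightarrow> real \<Rightarrow> real \<Rightarrow>
    (nat \<Rightarrow> real) \<times> real \<times> real \<Rightarrow> real" where
  "tau_star G \<epsilon> \<delta> \<beta> \<omega> = tauA G (2 * \<epsilon> / 3) (\<delta> / 2) (2 * \<beta> / 3) \<omega>"

text \<open>The edge mechanism Medge is a
family of output distributions (Markov kernel) drawn independently of the noise of A; the
probability is the composition (integral of the kernel's probability against the noise
distribution; nn_integral is the lower integral, so no measurability is presupposed).\<close>
definition n2e_prob ::
  "(('v::linorder) graph \<Rightarrow> real \<Rightarrow> real \<Rightarrow> real \<Rightarrow> real measure) \<Rightarrow>
   'v graph \<Rightarrow> real \<Rightarrow> real \<Rightarrow> real \<Rightarrow>
   ('v graph \<Rightarrow> real \<Rightarrow> real \<Rightarrow> bool) \<Rightarrow> ennreal" where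
  "n2e_prob Medge G \<epsilon> \<delta> \<beta> P =
     (\<integral>\<^sup>+ \<omega>. (let t = tau_star G \<epsilon> \<delta> \<beta> \<omega>; Gb = Clip G t in
        emeasure (Medge Gb (\<epsilon> / (6 * t)) (\<delta> / (4 * t)) (\<beta> / 3)) {m. P Gb t m})
      \<partial>noiseA (2 * \<epsilon> / 3))"

definition clipped_at_most :: "'v graph \<Rightarrow> 'v graph \<Rightarrow> real \<Rightarrow> bool" where
  "clipped_at_most G Gb k \<longleftrightarrow> (\<exists>S\<subseteq>fst G. real (card S) \<le> k \<and>
     (\<forall>e\<in>snd G - snd Gb. fst e \<in> S \<or> snd e \<in> S))"

end

(*
  All Laplace noises of procedure A stay inside their quantiles except with probability
  11 beta/24. On that event the doubling search over tau = 1, 2, 4, ... stops no later than the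
  first power of two 2^K >= deg G, because Q_LP(G, 2^K) = 0, and at the stopping tau the noisy
  test bounds |Q_LP(G, tau)| by O(log(K/beta)/eps) = O(log(log deg G/beta)/eps).
  Clipping at tau* >= 3 tau + 3 |Q_LP(G, tau)| + 1 only removes edges at nodes of degree > tau*.
  A near-optimal LP solution puts weight > 1/3 on every such node, since otherwise the edge
  budget tau of that node is exceeded; hence there are at most 3 |Q_LP(G, tau)| of them.
  Finally the edge mechanism on the clipped graph is accurate with probability 1 - beta/3, and
  the triangle inequality moves its error bound from Q(clipped graph) to Q(G).
*)
theory Submission
  imports Defs "HOL-Real_Asymp.Real_Asymp"
begin

section \<open>Laplace noise\<close>

lemma sets_lap [simp, measurable_cong]: "sets (lap b) = sets borel"
  by (simp add: lap_def)

lemma space_lap [simp]: "space (lap b) = UNIV"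
  by (simp add: lap_def)

lemma emeasure_lap:
  "A \<in> sets borel \<Longrightarrow>
    emeasure (lap b) A = (\<integral>\<^sup>+ x. ennreal (exp (- \<bar>x\<bar> / b) / (2 * b)) * indicator A x \<partial>lborel)"
  unfolding lap_def by (rule emeasure_density) auto

lemma emeasure_lap_atLeast:
  assumes b: "0 < b" and a: "0 \<le> a"
  shows "emeasure (lap b) {a..} = ennreal (exp (- a / b) / 2)"
proof -
  have "emeasure (lap b) {a..} = (\<integral>\<^sup>+ x. ennreal (exp (- x / b) / (2 * b)) * indicator {a..} x \<partial>lborel)"
    using a by (simp add: emeasure_lap) (intro nn_integral_cong, auto split: split_indicator)
  also have "\<dots> = ennreal (0 - (- exp (- a / b) / 2))"
  proof (rule nn_integral_FTC_atLeast)
    fix x :: real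
    show "((\<lambda>x. - exp (- x / b) / 2) has_real_derivative exp (- x / b) / (2 * b)) (at x)"
      using b by (auto intro!: derivative_eq_intros simp: field_simps)
    show "0 \<le> exp (- x / b) / (2 * b)" using b by simp
  next
    show "((\<lambda>x. - exp (- x / b) / 2) \<longlongrightarrow> 0) at_top" using b by real_asymp
  qed simp
  finally show ?thesis by simp
qed

lemma emeasure_lap_reflect: "emeasure (lap b) {..-a} = emeasure (lap b) {a..}"
  by (simp add: emeasure_lap, subst nn_integral_real_affine[where c="-1" and t=0])
     (auto intro!: nn_integral_cong split: split_indicator)

lemma emeasure_lap_singleton: "emeasure (lap b) {a} = 0"
  by (simp add: emeasure_lap)

lemma prob_space_lap:
  assumes b: "0 < b"
  shows "prob_space (lap b)"
proof
  have "emeasure (lap b) (space (lap b)) = emeasure (lap b) ({..-0} \<union> ({0..} - {0}))"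
    by (intro arg_cong[where f="emeasure _"]) auto
  also have "\<dots> = emeasure (lap b) {..-0} + emeasure (lap b) ({0..} - {0})"
    by (intro plus_emeasure[symmetric]) auto
  also have "emeasure (lap b) ({0..} - {0}) = emeasure (lap b) {0..}"
    by (intro emeasure_Diff_null_set) (auto simp: null_sets_def emeasure_lap_singleton)
  also have "emeasure (lap b) {..-0} + \<dots> = ennreal (1/2) + ennreal (1/2)"
    by (simp only: emeasure_lap_reflect emeasure_lap_atLeast[OF b order_refl]) simp
  also have "\<dots> = ennreal (1/2 + 1/2)"
    by (rule ennreal_plus[symmetric]) auto
  finally show "emeasure (lap b) (space (lap b)) = 1"
    by simp
qed

lemma measure_lap_upper_tail:
  assumes "0 < b" "1 \<le> c"
  shows "measure (lap b) {b * ln c..} = 1 / (2 * c)"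
  using assms emeasure_lap_atLeast[of b "b * ln c"] by (simp add: measure_def exp_minus field_simps)

lemma measure_lap_lower_tail:
  assumes "0 < b" "1 \<le> c"
  shows "measure (lap b) {..- (b * ln c)} = 1 / (2 * c)"
  using measure_lap_upper_tail[OF assms] by (simp add: measure_def emeasure_lap_reflect)

section \<open>The noise of procedure A\<close>

type_synonym noise = "(nat \<Rightarrow> real) \<times> real \<times> real"

lemma distr_pair_snd:
  assumes "prob_space M1" "sigma_finite_measure M2"
  shows "distr (M1 \<Otimes>\<^sub>M M2) M2 snd = M2"
proof (intro measure_eqI)
  fix A assume A: "A \<in> sets (distr (M1 \<Otimes>\<^sub>M M2) M2 snd)"
  then have "emeasure (distr (M1 \<Otimes>\<^sub>M M2) M2 snd) A = emeasure (M1 \<Otimes>\<^sub>M M2) (space M1 \<times> A)"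
    by (auto simp: emeasure_distr space_pair_measure dest: sets.sets_into_space
             intro!: arg_cong2[where f=emeasure])
  with A assms show "emeasure (distr (M1 \<Otimes>\<^sub>M M2) M2 snd) A = emeasure M2 A"
    by (simp add: sigma_finite_measure.emeasure_pair_measure_Times prob_space.emeasure_space_1)
qed simp

lemma space_noiseA [simp]: "space (noiseA e1) = UNIV"
  by (simp add: noiseA_def space_pair_measure space_PiM)

lemma prob_space_noiseA:
  assumes "0 < e1"
  shows "prob_space (noiseA e1)"
  unfolding noiseA_def using assms
  by (intro prob_space_pair prob_space_PiM prob_space_lap) (auto simp: prob_space_pair)

lemma distr_noiseA_query:
  assumes e1: "0 < e1"
  shows "distr (noiseA e1) borel (\<lambda>\<omega>. fst \<omega> k) = lap (4 / e1)"
proof -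
  let ?P = "\<Pi>\<^sub>M k\<in>(UNIV::nat set). lap (4 / e1)"
  have ps: "prob_space (lap (4 / e1) \<Otimes>\<^sub>M lap (6 / e1))"
    using e1 by (intro prob_space_pair prob_space_lap) (auto simp: prob_space_pair)
  have "distr (noiseA e1) borel (\<lambda>\<omega>. fst \<omega> k) = distr (distr (noiseA e1) ?P fst) borel (\<lambda>\<nu>. \<nu> k)"
    unfolding noiseA_def by (subst distr_distr) (auto simp: comp_def)
  also have "distr (noiseA e1) ?P fst = ?P"
    unfolding noiseA_def using ps by (rule prob_space.distr_pair_fst)
  also have "distr ?P borel (\<lambda>\<nu>. \<nu> k) = distr ?P (lap (4 / e1)) (\<lambda>\<nu>. \<nu> k)"
    by (rule distr_cong) auto
  also have "\<dots> = lap (4 / e1)"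
    using e1 by (intro distr_PiM_component prob_space_lap) auto
  finally show ?thesis .
qed

lemma distr_noiseA_tail:
  assumes e1: "0 < e1"
  shows "distr (noiseA e1) (lap (4 / e1) \<Otimes>\<^sub>M lap (6 / e1)) snd = lap (4 / e1) \<Otimes>\<^sub>M lap (6 / e1)"
  unfolding noiseA_def using e1
  by (intro distr_pair_snd prob_space_PiM prob_space_imp_sigma_finite prob_space_pair prob_space_lap)
     (auto simp: prob_space_pair)

lemma distr_noiseA_threshold:
  assumes e1: "0 < e1"
  shows "distr (noiseA e1) borel (\<lambda>\<omega>. fst (snd \<omega>)) = lap (4 / e1)"
proof -
  let ?R = "lap (4 / e1) \<Otimes>\<^sub>M lap (6 / e1)"
  have "distr (noiseA e1) borel (\<lambda>\<omega>. fst (snd \<omega>)) = distr (distr (noiseA e1) ?R snd) borel fst"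
    unfolding noiseA_def by (subst distr_distr) (auto simp: comp_def)
  also have "\<dots> = distr ?R (lap (4 / e1)) fst"
    using e1 by (intro distr_cong distr_noiseA_tail) auto
  also have "\<dots> = lap (4 / e1)"
    using e1 by (intro prob_space.distr_pair_fst prob_space_lap) auto
  finally show ?thesis .
qed

lemma distr_noiseA_final:
  assumes e1: "0 < e1"
  shows "distr (noiseA e1) borel (\<lambda>\<omega>. snd (snd \<omega>)) = lap (6 / e1)"
proof -
  let ?R = "lap (4 / e1) \<Otimes>\<^sub>M lap (6 / e1)"
  have "distr (noiseA e1) borel (\<lambda>\<omega>. snd (snd \<omega>)) = distr (distr (noiseA e1) ?R snd) borel snd"
    unfolding noiseA_def by (subst distr_distr) (auto simp: comp_def)
  also have "\<dots> = distr ?R (lap (6 / e1)) snd"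
    using e1 by (intro distr_cong distr_noiseA_tail) auto
  also have "\<dots> = lap (6 / e1)"
    using e1 by (intro distr_pair_snd prob_space_imp_sigma_finite prob_space_lap) auto
  finally show ?thesis .
qed

lemma measurable_noiseA_coordinates [measurable]:
  "(\<lambda>\<omega>. fst \<omega> k) \<in> borel_measurable (noiseA e1)"
  "(\<lambda>\<omega>. fst (snd \<omega>)) \<in> borel_measurable (noiseA e1)"
  "(\<lambda>\<omega>. snd (snd \<omega>)) \<in> borel_measurable (noiseA e1)"
  unfolding noiseA_def by measurable

lemma measure_noiseA_vimage:
  assumes "distr (noiseA e1) borel X = D" "X \<in> borel_measurable (noiseA e1)" "A \<in> sets borel"
  shows "measure (noiseA e1) (X -` A) = measure D A"
  using measure_distr[OF assms(2,3)] assms(1) by simp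

lemma sets_noiseA_Collect: "Measurable.pred (noiseA e1) P \<Longrightarrow> {\<omega>. P \<omega>} \<in> sets (noiseA e1)"
  by (simp add: pred_def)

lemma prob_query_noise_large:
  assumes e1: "0 < e1" and b1: "0 < b1" "b1 \<le> 2"
  shows "measure (noiseA e1) (\<Union>k\<le>K. (\<lambda>\<omega>. fst \<omega> k) -` {4 / e1 * ln (8 * (real K + 1) / b1)..})
    \<le> b1 / 16"
proof -
  interpret N: prob_space "noiseA e1"
    using e1 by (rule prob_space_noiseA)
  define B where "B = (\<lambda>k. (\<lambda>\<omega>::noise. fst \<omega> k) -` {4 / e1 * ln (8 * (real K + 1) / b1)..})"
  have "N.prob (B k) = b1 / (16 * (real K + 1))" for k
    using measure_lap_upper_tail[of "4 / e1" "8 * (real K + 1) / b1"] e1 b1 unfolding B_def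
    by (simp add: measure_noiseA_vimage[OF distr_noiseA_query[OF e1]])
  moreover have "B k \<in> sets (noiseA e1)" for k
    unfolding B_def vimage_def by (intro sets_noiseA_Collect) measurable
  ultimately have "N.prob (\<Union>k\<le>K. B k) \<le> (\<Sum>k\<le>K. b1 / (16 * (real K + 1)))"
    using N.finite_measure_subadditive_finite[of "{..K}" B] by force
  also have "\<dots> = b1 / 16"
    by (simp add: field_simps)
  finally show ?thesis
    unfolding B_def .
qed

(* Each threshold is a Laplace quantile: the events violating good_noise have probabilities
   b1/8 (twice for the threshold noise, once for the noise of round K), at most b1/16 (some
   round k <= K) and b1/4 (the final noise), 11 b1/16 in total. *)
definition good_noise :: "real \<Rightarrow> real \<Rightarrow> nat \<Rightarrow> noise \<Rightarrow> bool" where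
  "good_noise e1 b1 K \<omega> \<longleftrightarrow>
     (let a = 4 / e1 * ln (4 / b1) in
      \<bar>fst (snd \<omega>)\<bar> < a \<and> - a < fst \<omega> K \<and>
      (\<forall>k\<le>K. fst \<omega> k < 4 / e1 * ln (8 * (real K + 1) / b1)) \<and>
      - (6 / e1 * ln (2 / b1)) < snd (snd \<omega>))"

lemma sets_good_noise: "{\<omega>. good_noise e1 b1 K \<omega>} \<in> sets (noiseA e1)"
  unfolding good_noise_def Let_def by (intro sets_noiseA_Collect) measurable

lemma prob_good_noise:
  assumes e1: "0 < e1" and b1: "0 < b1" "b1 \<le> 2"
  shows "1 - 11 * b1 / 16 \<le> measure (noiseA e1) {\<omega>. good_noise e1 b1 K \<omega>}"
proof -
  interpret N: prob_space "noiseA e1"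
    using e1 by (rule prob_space_noiseA)
  define a where "a = 4 / e1 * ln (4 / b1)"
  define B1 :: "noise set" where "B1 = (\<lambda>\<omega>. fst (snd \<omega>)) -` {a..}"
  define B2 :: "noise set" where "B2 = (\<lambda>\<omega>. fst (snd \<omega>)) -` {..-a}"
  define B3 :: "noise set" where "B3 = (\<lambda>\<omega>. fst \<omega> K) -` {..-a}"
  define B4 :: "noise set"
    where "B4 = (\<Union>k\<le>K. (\<lambda>\<omega>. fst \<omega> k) -` {4 / e1 * ln (8 * (real K + 1) / b1)..})"
  define B5 :: "noise set" where "B5 = (\<lambda>\<omega>. snd (snd \<omega>)) -` {..- (6 / e1 * ln (2 / b1))}"
  have sets: "B \<in> sets (noiseA e1)" if "B \<in> {B1, B2, B3, B4, B5}" for B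
    using that unfolding B1_def B2_def B3_def B4_def B5_def vimage_def
    by (auto intro!: sets_noiseA_Collect) measurable
  have "- {\<omega>. good_noise e1 b1 K \<omega>} \<subseteq> B1 \<union> B2 \<union> B3 \<union> B4 \<union> B5"
    unfolding good_noise_def B1_def B2_def B3_def B4_def B5_def a_def
    by (auto simp: Let_def abs_less_iff not_less)
  then have "N.prob (- {\<omega>. good_noise e1 b1 K \<omega>}) \<le> N.prob (B1 \<union> B2 \<union> B3 \<union> B4 \<union> B5)"
    using sets by (intro N.finite_measure_mono) auto
  also have "\<dots> \<le> N.prob B1 + N.prob B2 + N.prob B3 + N.prob B4 + N.prob B5"
    using sets by (intro order.trans[OF measure_Un_le] add_right_mono order_refl sets.Un) auto
  also have "\<dots> \<le> b1 / 8 + b1 / 8 + b1 / 8 + b1 / 16 + b1 / 4"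
  proof -
    have "N.prob B1 = b1 / 8" "N.prob B2 = b1 / 8" "N.prob B3 = b1 / 8" "N.prob B5 = b1 / 4"
      using measure_lap_upper_tail[of "4 / e1" "4 / b1"] measure_lap_lower_tail[of "4 / e1" "4 / b1"]
        measure_lap_lower_tail[of "6 / e1" "2 / b1"] e1 b1
      unfolding B1_def B2_def B3_def B5_def a_def
      by (simp_all add: measure_noiseA_vimage distr_noiseA_threshold distr_noiseA_query
                        distr_noiseA_final)
    moreover have "N.prob B4 \<le> b1 / 16"
      unfolding B4_def using e1 b1 by (rule prob_query_noise_large)
    ultimately show ?thesis
      by linarith
  qed
  finally show ?thesis
    using N.prob_compl[OF sets_good_noise] by (simp add: Compl_eq_Diff_UNIV)
qed

section \<open>Clipping and the LP\<close>

lemma finite_edges: "wf_graph G \<Longrightarrow> finite (snd G)"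
  unfolding wf_graph_def by (rule finite_subset[of _ "fst G \<times> fst G"]) auto

lemma finite_edges_at: "wf_graph G \<Longrightarrow> finite (edges_at G v)"
  unfolding edges_at_def using finite_edges[of G] by auto

lemma card_edges_at_le_max_deg: "wf_graph G \<Longrightarrow> v \<in> fst G \<Longrightarrow> card (edges_at G v) \<le> max_deg G"
  unfolding max_deg_def wf_graph_def by (intro Max_ge) auto

lemma wf_graph_Clip: "wf_graph G \<Longrightarrow> wf_graph (Clip G t)"
  unfolding wf_graph_def Clip_def by auto

definition high_degree_nodes :: "'v graph \<Rightarrow> real \<Rightarrow> 'v set" where
  "high_degree_nodes G t = {v \<in> fst G. t < real (card (edges_at G v))}"

lemma Clip_removed_edge:
  assumes wf: "wf_graph G" and e: "e \<in> snd G - snd (Clip G t)"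
  shows "fst e \<in> high_degree_nodes G t \<or> snd e \<in> high_degree_nodes G t"
proof -
  have eG: "e \<in> snd G" and ends: "fst e \<in> fst G" "snd e \<in> fst G"
    using e wf unfolding wf_graph_def by auto
  have rank_le: "edge_rank G v e \<le> card (edges_at G v)" for v
    unfolding edge_rank_def using finite_edges_at[OF wf] by (intro card_mono) auto
  have "e \<in> edges_at G (fst e)" "e \<in> edges_at G (snd e)"
    using eG by (auto simp: edges_at_def)
  moreover have "e \<notin> clip_at G t (fst e) \<or> e \<notin> clip_at G t (snd e)"
    using e eG by (auto simp: Clip_def)
  ultimately have "t < real (edge_rank G (fst e) e) \<or> t < real (edge_rank G (snd e) e)"
    unfolding clip_at_def by auto
  then have "t < real (card (edges_at G (fst e))) \<or> t < real (card (edges_at G (snd e)))"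
    using rank_le[of "fst e"] rank_le[of "snd e"] by (meson less_le_trans of_nat_le_iff)
  then show ?thesis
    using ends unfolding high_degree_nodes_def by blast
qed

lemma clipped_at_most_Clip:
  assumes "wf_graph G"
  shows "clipped_at_most G (Clip G t) (card (high_degree_nodes G t))"
  unfolding clipped_at_most_def
proof (intro exI conjI)
  show "high_degree_nodes G t \<subseteq> fst G"
    unfolding high_degree_nodes_def by blast
  show "\<forall>e\<in>snd G - snd (Clip G t). fst e \<in> high_degree_nodes G t \<or> snd e \<in> high_degree_nodes G t"
    using Clip_removed_edge[OF assms] by blast
qed simp

lemma clipped_at_most_mono: "clipped_at_most G Gb k \<Longrightarrow> k \<le> k' \<Longrightarrow> clipped_at_most G Gb k'"
  unfolding clipped_at_most_def by (meson order_trans)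

definition lp_values :: "'v graph \<Rightarrow> real \<Rightarrow> real set" where
  "lp_values G \<tau> = {- (\<Sum>v\<in>fst G. x v) | x y. lp_feasible G \<tau> x y}"

lemma Q_LP_eq_Sup: "Q_LP G \<tau> = Sup (lp_values G \<tau>)"
  by (simp add: Q_LP_def lp_values_def)

lemma lp_values_nonpos: "r \<in> lp_values G \<tau> \<Longrightarrow> r \<le> 0"
  unfolding lp_values_def lp_feasible_def by (auto intro!: sum_nonneg)

lemma lp_values_nonempty: "0 \<le> \<tau> \<Longrightarrow> lp_values G \<tau> \<noteq> {}"
proof -
  assume "0 \<le> \<tau>"
  then have "lp_feasible G \<tau> (\<lambda>_. 1) (\<lambda>_. 0)"
    unfolding lp_feasible_def by auto
  then show ?thesis
    unfolding lp_values_def by blast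
qed

lemma Q_LP_nonpos: "0 \<le> \<tau> \<Longrightarrow> Q_LP G \<tau> \<le> 0"
  unfolding Q_LP_eq_Sup by (metis cSup_least lp_values_nonempty lp_values_nonpos)

lemma Q_LP_eq_0:
  assumes wf: "wf_graph G" and deg: "real (max_deg G) \<le> \<tau>"
  shows "Q_LP G \<tau> = 0"
proof -
  have "real (card (edges_at G v)) \<le> \<tau>" if "v \<in> fst G" for v
    using card_edges_at_le_max_deg[OF wf that] deg by linarith
  then have "lp_feasible G \<tau> (\<lambda>_. 0) (\<lambda>_. 1)"
    unfolding lp_feasible_def by auto
  then have "0 \<in> lp_values G \<tau>"
    unfolding lp_values_def by force
  then show ?thesis
    unfolding Q_LP_eq_Sup by (metis cSup_eq_maximum lp_values_nonpos)
qed

lemma Q_LP_approx: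
  assumes "0 \<le> \<tau>" and "r < Q_LP G \<tau>"
  obtains x y where "lp_feasible G \<tau> x y" and "r < - (\<Sum>v\<in>fst G. x v)"
proof -
  obtain s where "s \<in> lp_values G \<tau>" "r < s"
    using less_cSupE[OF assms(2)[unfolded Q_LP_eq_Sup] lp_values_nonempty[OF assms(1)]] by blast
  then show ?thesis
    using that unfolding lp_values_def by blast
qed

definition opposite :: "'v \<Rightarrow> 'v \<times> 'v \<Rightarrow> 'v" where
  "opposite v e = (if fst e = v then snd e else fst e)"

lemma inj_on_opposite:
  assumes "wf_graph G"
  shows "inj_on (opposite v) (edges_at G v)"
proof
  fix e e' assume e: "e \<in> edges_at G v" and e': "e' \<in> edges_at G v"
    and eq: "opposite v e = opposite v e'"
  have "fst e < snd e" "fst e' < snd e'"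
    using assms e e' unfolding wf_graph_def edges_at_def by auto
  then show "e = e'"
    using e e' eq unfolding edges_at_def opposite_def
    by (cases e, cases e') (auto split: if_splits)
qed

lemma opposite_in_nodes: "wf_graph G \<Longrightarrow> e \<in> edges_at G v \<Longrightarrow> opposite v e \<in> fst G"
  unfolding wf_graph_def edges_at_def opposite_def by auto

lemma sum_opposite_le:
  fixes x :: "'v::linorder \<Rightarrow> real"
  assumes wf: "wf_graph G" and x: "\<And>u. u \<in> fst G \<Longrightarrow> 0 \<le> x u"
  shows "(\<Sum>e\<in>edges_at G v. x (opposite v e)) \<le> (\<Sum>u\<in>fst G. x u)"
proof -
  have "(\<Sum>e\<in>edges_at G v. x (opposite v e)) = (\<Sum>u\<in>opposite v ` edges_at G v. x u)"
    using sum.reindex[OF inj_on_opposite[OF wf, of v], of x] by simp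
  also have "\<dots> \<le> (\<Sum>u\<in>fst G. x u)"
    using wf opposite_in_nodes[OF wf] x by (intro sum_mono2) (auto simp: wf_graph_def)
  finally show ?thesis .
qed

lemma lp_feasible_high_degree_node:
  assumes wf: "wf_graph G" and f: "lp_feasible G \<tau> x y"
    and small: "3 * (\<tau> + (\<Sum>u\<in>fst G. x u)) \<le> 2 * t"
    and v: "v \<in> high_degree_nodes G t"
  shows "1 / 3 < x v"
proof (rule ccontr)
  assume "\<not> 1 / 3 < x v"
  have vG: "v \<in> fst G" and deg: "t < real (card (edges_at G v))"
    using v unfolding high_degree_nodes_def by auto
  have "2 / 3 - x (opposite v e) \<le> y e" if e: "e \<in> edges_at G v" for e
  proof -
    have "1 - x (fst e) - x (snd e) \<le> y e"
      using e f unfolding lp_feasible_def edges_at_def by auto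
    then show ?thesis
      using e \<open>\<not> 1 / 3 < x v\<close> unfolding edges_at_def opposite_def by auto
  qed
  then have "(\<Sum>e\<in>edges_at G v. 2 / 3 - x (opposite v e)) \<le> (\<Sum>e\<in>edges_at G v. y e)"
    by (rule sum_mono)
  also have "\<dots> \<le> \<tau>"
    using f vG unfolding lp_feasible_def by auto
  finally have "2 / 3 * real (card (edges_at G v)) - (\<Sum>e\<in>edges_at G v. x (opposite v e)) \<le> \<tau>"
    by (simp add: sum_subtractf)
  moreover have "(\<Sum>e\<in>edges_at G v. x (opposite v e)) \<le> (\<Sum>u\<in>fst G. x u)"
    using f by (intro sum_opposite_le[OF wf]) (auto simp: lp_feasible_def)
  ultimately show False
    using deg small by argo
qed

lemma card_high_degree_nodes_le_lp:
  assumes wf: "wf_graph G" and f: "lp_feasible G \<tau> x y"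
    and small: "3 * (\<tau> + (\<Sum>u\<in>fst G. x u)) \<le> 2 * t"
  shows "real (card (high_degree_nodes G t)) \<le> 3 * (\<Sum>u\<in>fst G. x u)"
proof -
  have fin: "finite (fst G)"
    using wf by (simp add: wf_graph_def)
  have "real (card (high_degree_nodes G t)) * (1 / 3) \<le> (\<Sum>v\<in>high_degree_nodes G t. x v)"
    using lp_feasible_high_degree_node[OF wf f small]
      sum_mono[of "high_degree_nodes G t" "\<lambda>_. 1 / 3" x] by (simp add: less_imp_le)
  also have "\<dots> \<le> (\<Sum>u\<in>fst G. x u)"
    using f fin by (intro sum_mono2) (auto simp: lp_feasible_def high_degree_nodes_def)
  finally show ?thesis
    by simp
qed

lemma card_high_degree_nodes_le_Q_LP:
  assumes wf: "wf_graph G" and \<tau>: "0 \<le> \<tau>" and t: "3 * (\<tau> + \<bar>Q_LP G \<tau>\<bar>) < 2 * t"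
  shows "real (card (high_degree_nodes G t)) \<le> 3 * \<bar>Q_LP G \<tau>\<bar>"
proof (rule ccontr)
  define n where "n = real (card (high_degree_nodes G t))"
  assume "\<not> n \<le> 3 * \<bar>Q_LP G \<tau>\<bar>"
  then have "- min (n / 3) (2 * t / 3 - \<tau>) < Q_LP G \<tau>"
    using t Q_LP_nonpos[OF \<tau>, of G] by auto
  then obtain x y where f: "lp_feasible G \<tau> x y"
    and sum_x: "(\<Sum>u\<in>fst G. x u) < min (n / 3) (2 * t / 3 - \<tau>)"
    using Q_LP_approx[OF \<tau>] by (metis neg_less_iff_less)
  have "n \<le> 3 * (\<Sum>u\<in>fst G. x u)"
    unfolding n_def using sum_x by (intro card_high_degree_nodes_le_lp[OF wf f]) auto
  then show False
    using sum_x by auto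
qed

section \<open>Procedure A and the N2E mechanism\<close>

lemma tauA_witness:
  assumes wf: "wf_graph G" and deg: "real (max_deg G) \<le> 2 ^ K" and e1: "0 < e1" and b1: "0 < b1"
    and good: "good_noise e1 b1 K \<omega>"
  obtains \<tau> where "1 \<le> \<tau>" and "3 * \<tau> + 3 * \<bar>Q_LP G \<tau>\<bar> + 1 \<le> tauA G e1 d1 b1 \<omega>"
    and "\<bar>Q_LP G \<tau>\<bar> < 3 * (4 / e1 * ln (4 / b1)) + 4 / e1 * ln (8 * (real K + 1) / b1)"
proof -
  obtain \<nu> t0 z where \<omega>: "\<omega> = (\<nu>, t0, z)"
    by (cases \<omega>) auto
  define a where "a = 4 / e1 * ln (4 / b1)"
  define c where "c = 4 / e1 * ln (8 * (real K + 1) / b1)"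
  have t0: "\<bar>t0\<bar> < a" and \<nu>K: "- a < \<nu> K" and \<nu>: "\<And>k. k \<le> K \<Longrightarrow> \<nu> k < c"
    and z: "- (6 / e1 * ln (2 / b1)) < z"
    using good unfolding good_noise_def \<omega> a_def c_def Let_def by auto
  define Tt where "Tt = - (8 / e1) * ln (4 / b1) + t0"
  have Tt: "Tt = t0 - 2 * a"
    unfolding Tt_def a_def by simp
  have stop_K: "Tt < Q_LP G (2 ^ K) + \<nu> K"
    using Q_LP_eq_0[OF wf deg] Tt t0 \<nu>K by simp
  define k where "k = (LEAST k. Tt < Q_LP G (2 ^ k) + \<nu> k)"
  have stop: "Tt < Q_LP G (2 ^ k) + \<nu> k"
    unfolding k_def using stop_K by (rule LeastI)
  have "k \<le> K"
    unfolding k_def using stop_K by (rule Least_le)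
  define \<tau> where "\<tau> = (2::real) ^ k"
  have "- Q_LP G \<tau> < 3 * a + c"
    using stop \<nu>[OF \<open>k \<le> K\<close>] Tt t0 unfolding \<tau>_def by linarith
  moreover have "\<bar>Q_LP G \<tau>\<bar> = - Q_LP G \<tau>"
    using Q_LP_nonpos[of \<tau> G] unfolding \<tau>_def by simp
  moreover have "3 * \<tau> + 3 * \<bar>Q_LP G \<tau>\<bar> + 1 \<le> tauA G e1 d1 b1 \<omega>"
  proof -
    have "6 / e1 * ln (2 / b1) \<le> 6 / e1 * ln (max (1 / d1) (2 / b1))"
      using e1 b1 by (intro mult_left_mono ln_mono) auto
    then show ?thesis
      using z unfolding tauA_def \<omega> Let_def \<tau>_def k_def Tt_def by simp
  qed
  moreover have "1 \<le> \<tau>"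
    unfolding \<tau>_def by simp
  ultimately show ?thesis
    using that unfolding a_def c_def by simp
qed

lemma tauA_bounds:
  assumes wf: "wf_graph G" and deg: "real (max_deg G) \<le> 2 ^ K" and e1: "0 < e1" and b1: "0 < b1"
    and good: "good_noise e1 b1 K \<omega>"
  shows "4 \<le> tauA G e1 d1 b1 \<omega>"
    and "real (card (high_degree_nodes G (tauA G e1 d1 b1 \<omega>)))
           \<le> 3 * (3 * (4 / e1 * ln (4 / b1)) + 4 / e1 * ln (8 * (real K + 1) / b1))"
proof -
  obtain \<tau> where \<tau>: "1 \<le> \<tau>" and t: "3 * \<tau> + 3 * \<bar>Q_LP G \<tau>\<bar> + 1 \<le> tauA G e1 d1 b1 \<omega>"
    and Q: "\<bar>Q_LP G \<tau>\<bar> < 3 * (4 / e1 * ln (4 / b1)) + 4 / e1 * ln (8 * (real K + 1) / b1)"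
    using tauA_witness[OF assms] .
  show "4 \<le> tauA G e1 d1 b1 \<omega>"
    using \<tau> t by linarith
  have "real (card (high_degree_nodes G (tauA G e1 d1 b1 \<omega>))) \<le> 3 * \<bar>Q_LP G \<tau>\<bar>"
    using \<tau> t by (intro card_high_degree_nodes_le_Q_LP[OF wf]) auto
  then show "real (card (high_degree_nodes G (tauA G e1 d1 b1 \<omega>)))
           \<le> 3 * (3 * (4 / e1 * ln (4 / b1)) + 4 / e1 * ln (8 * (real K + 1) / b1))"
    using Q by argo
qed

lemma exists_pow2_log_bounded:
  obtains K :: nat where "real D \<le> 2 ^ K" and "real K + 1 \<le> 4 * ln (max (real D) (exp 1))"
proof (cases "D \<le> 4")
  case True
  have "ln (exp 1) \<le> ln (max (real D) (exp 1))"
    by (intro ln_mono) auto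
  then have "1 \<le> ln (max (real D) (exp 1))"
    by simp
  then show ?thesis
    using True that[of 2] by simp
next
  case False
  then obtain n where n: "2 ^ n < D" "D \<le> 2 ^ (n + 1)"
    using ex_power_ivl2[of 2 D] by auto
  have ln2: "2 / 3 \<le> ln (2::real)"
    by (rule ln2_ge_two_thirds)
  have "ln (4::real) \<le> ln (real D)"
    using False by simp
  then have lnD: "4 / 3 \<le> ln (real D)"
    using ln2 ln_mult[of 2 2] by simp
  have "real n * ln 2 < ln (real D)"
    using n(1) ln_less_cancel_iff[of "2 ^ n" "real D"] by (simp add: ln_realpow flip: of_nat_less_iff)
  then have "real n * (2 / 3) < ln (real D)"
    using ln2 by (smt (verit) mult_left_mono of_nat_0_le_iff)
  moreover have "max (real D) (exp 1) = real D"
    using False exp_le by simp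
  ultimately have "real (n + 1) + 1 \<le> 4 * ln (max (real D) (exp 1))"
    using lnD by simp
  moreover have "real D \<le> 2 ^ (n + 1)"
    using n(2) by (metis of_nat_le_iff of_nat_numeral of_nat_power)
  ultimately show ?thesis
    using that by blast
qed

lemma ln_thresholds_le_ln_ln:
  fixes \<beta> D :: real
  assumes \<beta>: "0 < \<beta>" "\<beta> < 1" and D: "4 \<le> D" and K: "real K + 1 \<le> 4 * ln D"
  shows "3 * ln (6 / \<beta>) + ln (12 * (real K + 1) / \<beta>) \<le> 250 * ln (ln D / \<beta>)"
proof -
  define L where "L = ln D"
  define u where "u = - ln \<beta>"
  have "ln (4::real) = 2 * ln 2"
    using ln_mult[of 2 2] by simp
  then have L: "4 / 3 \<le> L"
    unfolding L_def using ln2_ge_two_thirds D ln_le_cancel_iff[of 4 D] by simp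
  have lnL: "1 / 4 \<le> ln L"
  proof -
    have "ln (1 / L) \<le> 1 / L - 1"
      using L by (intro ln_le_minus_one) simp
    moreover have "1 / L \<le> 3 / 4"
      using L by (simp add: field_simps)
    ultimately show ?thesis
      using L by (simp add: ln_div)
  qed
  have "0 \<le> u"
    using \<beta> unfolding u_def by simp
  have "ln (6 / \<beta>) = ln 6 + u"
    using \<beta> by (simp add: ln_div u_def)
  moreover have "ln (6::real) \<le> 5"
    using ln_le_minus_one[of 6] by simp
  moreover have "ln (12 * (real K + 1) / \<beta>) \<le> ln (48 * L / \<beta>)"
    using K \<beta> unfolding L_def by (intro ln_mono) (auto simp: divide_right_mono)
  moreover have "ln (48 * L / \<beta>) = ln 48 + ln L + u"
    using \<beta> L by (simp add: ln_div ln_mult u_def)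
  moreover have "ln (48::real) \<le> 47"
    using ln_le_minus_one[of 48] by simp
  moreover have "ln (L / \<beta>) = ln L + u"
    using L \<beta> by (simp add: ln_div u_def)
  ultimately show ?thesis
    using lnL \<open>0 \<le> u\<close> unfolding L_def by linarith
qed

lemma tau_star_clips_few_nodes:
  assumes wf: "wf_graph G" and \<epsilon>: "0 < \<epsilon>" and \<beta>: "0 < \<beta>" "\<beta> < 1"
    and deg: "real (max_deg G) \<le> 2 ^ K"
    and K: "real K + 1 \<le> 4 * ln (max (real (max_deg G)) (exp 1))"
    and good: "good_noise (2 * \<epsilon> / 3) (2 * \<beta> / 3) K \<omega>"
  shows "0 < tau_star G \<epsilon> \<delta> \<beta> \<omega>"
    and "clipped_at_most G (Clip G (tau_star G \<epsilon> \<delta> \<beta> \<omega>))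
           (4500 * ln (ln (max (real (max_deg G)) (exp 1)) / \<beta>) / \<epsilon>)"
proof -
  define t where "t = tau_star G \<epsilon> \<delta> \<beta> \<omega>"
  define D where "D = max (real (max_deg G)) (exp 1)"
  have t4: "4 \<le> t" and card: "real (card (high_degree_nodes G t))
      \<le> 3 * (3 * (4 / (2 * \<epsilon> / 3) * ln (4 / (2 * \<beta> / 3)))
             + 4 / (2 * \<epsilon> / 3) * ln (8 * (real K + 1) / (2 * \<beta> / 3)))"
    unfolding t_def tau_star_def using tauA_bounds[OF wf deg _ _ good] \<epsilon> \<beta> by auto
  then show "0 < tau_star G \<epsilon> \<delta> \<beta> \<omega>"
    unfolding t_def by simp
  have "real (card (high_degree_nodes G t)) \<le> 4500 * ln (ln D / \<beta>) / \<epsilon>"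
  proof (cases "max_deg G \<le> 3")
    case True
    then have "high_degree_nodes G t = {}"
      using card_edges_at_le_max_deg[OF wf] t4 unfolding high_degree_nodes_def by force
    moreover have "ln (exp 1) \<le> ln D"
      unfolding D_def by (intro ln_mono) auto
    then have "1 \<le> ln D / \<beta>"
      using \<beta> by (simp add: le_divide_eq)
    ultimately show ?thesis
      using \<epsilon> by simp
  next
    case False
    then have D: "D = real (max_deg G)" and "4 \<le> real (max_deg G)"
      unfolding D_def using exp_le by auto
    have "4 / (2 * \<beta> / 3) = 6 / \<beta>" "8 * (real K + 1) / (2 * \<beta> / 3) = 12 * (real K + 1) / \<beta>"
      using \<beta> by (simp_all add: field_simps)
    then have "real (card (high_degree_nodes G t)) \<le> 18 * (3 * ln (6 / \<beta>) + ln (12 * (real K + 1) / \<beta>)) / \<epsilon>"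
      using card by (simp add: field_simps add_divide_distrib)
    also have "\<dots> \<le> 18 * (250 * ln (ln D / \<beta>)) / \<epsilon>"
      using ln_thresholds_le_ln_ln[OF \<beta> \<open>4 \<le> real (max_deg G)\<close> K[folded D_def, unfolded D]] \<epsilon>
      unfolding D
      by (intro divide_right_mono mult_left_mono) auto
    finally show ?thesis
      by simp
  qed
  then show "clipped_at_most G (Clip G (tau_star G \<epsilon> \<delta> \<beta> \<omega>))
      (4500 * ln (ln (max (real (max_deg G)) (exp 1)) / \<beta>) / \<epsilon>)"
    unfolding t_def D_def by (rule clipped_at_most_mono[OF clipped_at_most_Clip[OF wf]])
qed

lemma emeasure_abs_diff_le_triangle:
  fixes M :: "real measure"
  assumes "prob_space M" and sets: "sets M = sets borel"
    and "1 - b \<le> measure M {m. \<bar>m - a\<bar> \<le> r}"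
  shows "ennreal (1 - b) \<le> emeasure M {m. \<bar>m - c\<bar> \<le> \<bar>c - a\<bar> + r}"
proof -
  interpret prob_space M by fact
  have "{m. \<bar>m - c\<bar> \<le> \<bar>c - a\<bar> + r} \<in> sets M"
    unfolding sets by measurable
  then have "measure M {m. \<bar>m - a\<bar> \<le> r} \<le> measure M {m. \<bar>m - c\<bar> \<le> \<bar>c - a\<bar> + r}"
    by (rule finite_measure_mono[rotated]) auto
  then show ?thesis
    using assms(3) by (simp add: emeasure_eq_measure)
qed

lemma nn_integral_ge_cmult_emeasure:
  assumes "E \<in> sets M" and "\<And>\<omega>. \<omega> \<in> E \<Longrightarrow> c \<le> f \<omega>"
  shows "c * emeasure M E \<le> (\<integral>\<^sup>+\<omega>. f \<omega> \<partial>M)"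
proof -
  have "c * emeasure M E = (\<integral>\<^sup>+\<omega>. c * indicator E \<omega> \<partial>M)"
    using assms(1) by (simp add: nn_integral_cmult_indicator)
  also have "\<dots> \<le> (\<integral>\<^sup>+\<omega>. f \<omega> \<partial>M)"
    using assms(2) by (intro nn_integral_mono) (auto split: split_indicator)
  finally show ?thesis .
qed

lemma n2e_run_accurate:
  fixes Q :: "('v::linorder) graph \<Rightarrow> real"
    and Medge :: "'v graph \<Rightarrow> real \<Rightarrow> real \<Rightarrow> real \<Rightarrow> real measure"
    and Err :: "'v graph \<Rightarrow> real \<Rightarrow> real \<Rightarrow> real \<Rightarrow> real"
  assumes wf: "wf_graph G" and \<epsilon>: "0 < \<epsilon>" and \<delta>: "0 < \<delta>" and \<beta>: "0 < \<beta>" "\<beta> < 1"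
    and deg: "real (max_deg G) \<le> 2 ^ K"
    and K: "real K + 1 \<le> 4 * ln (max (real (max_deg G)) (exp 1))"
    and good: "good_noise (2 * \<epsilon> / 3) (2 * \<beta> / 3) K \<omega>"
    and Medge: "\<And>H e d b. wf_graph H \<Longrightarrow> prob_space (Medge H e d b) \<and> sets (Medge H e d b) = sets borel"
    and accurate: "\<And>H e d b. wf_graph H \<Longrightarrow> 0 < e \<Longrightarrow> 0 < d \<Longrightarrow> 0 < b \<Longrightarrow>
        1 - b \<le> measure (Medge H e d b) {m. \<bar>m - Q H\<bar> \<le> Err H e d b}"
  shows "ennreal (1 - \<beta> / 3) \<le>
      (let t = tau_star G \<epsilon> \<delta> \<beta> \<omega>; Gb = Clip G t in
        emeasure (Medge Gb (\<epsilon> / (6 * t)) (\<delta> / (4 * t)) (\<beta> / 3))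
          {m. \<bar>m - Q G\<bar> \<le> \<bar>Q G - Q Gb\<bar> + Err Gb (\<epsilon> / (6 * t)) (\<delta> / (4 * t)) (\<beta> / 3) \<and>
              clipped_at_most G Gb (4500 * ln (ln (max (real (max_deg G)) (exp 1)) / \<beta>) / \<epsilon>)})"
proof -
  define t where "t = tau_star G \<epsilon> \<delta> \<beta> \<omega>"
  have wfC: "wf_graph (Clip G t)"
    using wf by (rule wf_graph_Clip)
  have "0 < t"
    unfolding t_def by (rule tau_star_clips_few_nodes[OF wf \<epsilon> \<beta> deg K good])
  then have "1 - \<beta> / 3 \<le> measure (Medge (Clip G t) (\<epsilon> / (6 * t)) (\<delta> / (4 * t)) (\<beta> / 3))
      {m. \<bar>m - Q (Clip G t)\<bar> \<le> Err (Clip G t) (\<epsilon> / (6 * t)) (\<delta> / (4 * t)) (\<beta> / 3)}"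
    using \<epsilon> \<delta> \<beta> by (intro accurate[OF wfC]) auto
  then have "ennreal (1 - \<beta> / 3) \<le> emeasure (Medge (Clip G t) (\<epsilon> / (6 * t)) (\<delta> / (4 * t)) (\<beta> / 3))
      {m. \<bar>m - Q G\<bar> \<le> \<bar>Q G - Q (Clip G t)\<bar> + Err (Clip G t) (\<epsilon> / (6 * t)) (\<delta> / (4 * t)) (\<beta> / 3)}"
    using Medge[OF wfC] by (intro emeasure_abs_diff_le_triangle) auto
  then show ?thesis
    using tau_star_clips_few_nodes(2)[OF wf \<epsilon> \<beta> deg K good] unfolding t_def Let_def by simp
qed

lemma n2e_utility:
  fixes Q :: "('v::linorder) graph \<Rightarrow> real"
    and Medge :: "'v graph \<Rightarrow> real \<Rightarrow> real \<Rightarrow> real \<Rightarrow> real measure"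
    and Err :: "'v graph \<Rightarrow> real \<Rightarrow> real \<Rightarrow> real \<Rightarrow> real"
  assumes \<epsilon>: "0 < \<epsilon>" and \<delta>: "0 < \<delta>" and \<beta>: "0 < \<beta>" "\<beta> < 1" and wf: "wf_graph G"
    and Medge: "\<And>H e d b. wf_graph H \<Longrightarrow> prob_space (Medge H e d b) \<and> sets (Medge H e d b) = sets borel"
    and accurate: "\<And>H e d b. wf_graph H \<Longrightarrow> 0 < e \<Longrightarrow> 0 < d \<Longrightarrow> 0 < b \<Longrightarrow>
        1 - b \<le> measure (Medge H e d b) {m. \<bar>m - Q H\<bar> \<le> Err H e d b}"
  shows "ennreal (1 - \<beta>) \<le> n2e_prob Medge G \<epsilon> \<delta> \<beta>
    (\<lambda>Gb t m. \<bar>m - Q G\<bar> \<le> \<bar>Q G - Q Gb\<bar> + Err Gb (\<epsilon> / (6 * t)) (\<delta> / (4 * t)) (\<beta> / 3) \<and>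
       clipped_at_most G Gb (4500 * ln (ln (max (real (max_deg G)) (exp 1)) / \<beta>) / \<epsilon>))"
proof -
  obtain K where deg: "real (max_deg G) \<le> 2 ^ K"
    and K: "real K + 1 \<le> 4 * ln (max (real (max_deg G)) (exp 1))"
    by (rule exists_pow2_log_bounded)
  define e1 where "e1 = 2 * \<epsilon> / 3"
  define E where "E = {\<omega>. good_noise e1 (2 * \<beta> / 3) K \<omega>}"
  interpret N: prob_space "noiseA e1"
    using \<epsilon> unfolding e1_def by (intro prob_space_noiseA) simp
  have E: "E \<in> sets (noiseA e1)"
    unfolding E_def by (rule sets_good_noise)
  have "1 - 11 * (2 * \<beta> / 3) / 16 \<le> N.prob E"
    unfolding E_def using \<epsilon> \<beta> unfolding e1_def by (intro prob_good_noise) auto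
  then have PE: "1 - 11 * \<beta> / 24 \<le> N.prob E"
    by simp
  have "1 - \<beta> \<le> (1 - \<beta> / 3) * (1 - 11 * \<beta> / 24)"
    using \<beta> by (simp add: algebra_simps)
  then have "ennreal (1 - \<beta>) \<le> ennreal (1 - \<beta> / 3) * ennreal (1 - 11 * \<beta> / 24)"
    using \<beta> by (simp flip: ennreal_mult)
  also have "\<dots> \<le> ennreal (1 - \<beta> / 3) * emeasure (noiseA e1) E"
    using PE by (intro mult_left_mono) (auto simp: N.emeasure_eq_measure)
  also have "\<dots> \<le> n2e_prob Medge G \<epsilon> \<delta> \<beta>
    (\<lambda>Gb t m. \<bar>m - Q G\<bar> \<le> \<bar>Q G - Q Gb\<bar> + Err Gb (\<epsilon> / (6 * t)) (\<delta> / (4 * t)) (\<beta> / 3) \<and>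
       clipped_at_most G Gb (4500 * ln (ln (max (real (max_deg G)) (exp 1)) / \<beta>) / \<epsilon>))"
    unfolding n2e_prob_def e1_def[symmetric]
    using n2e_run_accurate[OF wf \<epsilon> \<delta> \<beta> deg K _ Medge accurate]
    by (intro nn_integral_ge_cmult_emeasure[OF E]) (simp add: E_def e1_def)
  finally show ?thesis .
qed

theorem mainTheorem10:
  "\<exists>C>0. \<forall>(Q :: ('v::linorder) graph \<Rightarrow> real)
            (Medge :: 'v graph \<Rightarrow> real \<Rightarrow> real \<Rightarrow> real \<Rightarrow> real measure)
            (Err :: 'v graph \<Rightarrow> real \<Rightarrow> real \<Rightarrow> real \<Rightarrow> real)
            (\<epsilon>::real) (\<delta>::real) (\<beta>::real) (G :: 'v graph).
     \<epsilon> > 0 \<and> 0 < \<delta> \<and> \<delta> < 1 \<and> 0 < \<beta> \<and> \<beta> < 1 \<and> wf_graph G \<and>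
     (\<forall>H e d b. wf_graph H \<longrightarrow>
        prob_space (Medge H e d b) \<and> sets (Medge H e d b) = sets borel) \<and>
     (\<forall>H H' e d b S. wf_graph H \<and> wf_graph H' \<and> edge_neighbors H H' \<and> e > 0 \<and> d > 0 \<and>
        S \<in> sets borel \<longrightarrow>
        measure (Medge H e d b) S \<le> exp e * measure (Medge H' e d b) S + d) \<and>
     (\<forall>H e d b. wf_graph H \<and> e > 0 \<and> d > 0 \<and> b > 0 \<longrightarrow>
        measure (Medge H e d b) {m. \<bar>m - Q H\<bar> \<le> Err H e d b} \<ge> 1 - b)
     \<longrightarrow>
     ennreal (1 - \<beta>) \<le> n2e_prob Medge G \<epsilon> \<delta> \<beta>
       (\<lambda>Gb t m. \<bar>m - Q G\<bar> \<le> \<bar>Q G - Q Gb\<bar> + Err Gb (\<epsilon> / (6 * t)) (\<delta> / (4 * t)) (\<beta> / 3) \<and>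
          clipped_at_most G Gb
            (C * ln (ln (max (real (max_deg G)) (exp 1)) / \<beta>) / \<epsilon>))"
  by (intro exI[of _ 4500] conjI allI impI, simp, elim conjE) (rule n2e_utility; blast)

end
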